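(* For every $\psi_u\in(0,2\pi)$, $$\alpha_{\mathrm I}=\frac{\zeta_u\cos^2\!\big(-2\pi t-\frac{\pi}{\mu}+\frac{2\pi}{\mu}\lceil t\mu\rceil\big)}{V^2},$$ where $t=\frac34-\frac{\psi_u}{2\pi}\in(-\tfrac14,\tfrac34)$ and $V=\sin(\pi/\mu)/W$. In particular, if $\psi_u$ is uniform on $(0,2\pi)$ then $t$ is uniform on $(-\tfrac14,\tfrac34)$.
   Context: Setup: Let $W\ge 1$ be an integer and $\mu\ge 2$ an even integer, and set $K=\mu W+1$. Let $\zeta_u>0$ and $\psi_u\in(0,2\pi)$, and for $k=1,\dots,K$ let $h_{u,k}=\zeta_u^{1/2}e^{j(\psi_u+2\pi(k-1)/\mu)}$, where $j=\sqrt{-1}$. Let $\mathcal K_1=\{k\in\{2,\dots,K\}:\operatorname{Re}(h_{u,k})>0\}$ and $\alpha_{\mathrm I}=\big(\sum_{k\in\mathcal K_1}\operatorname{Re}(h_{u,k})\big)^2$. *)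

theory Defs
  imports "HOL-Analysis.Analysis"
begin

definition hcoef :: "real \<Rightarrow> real \<Rightarrow> nat \<Rightarrow> nat \<Rightarrow> complex" where
  "hcoef \<zeta> \<psi> \<mu> k =
     complex_of_real (sqrt \<zeta>) * exp (\<i> * complex_of_real (\<psi> + 2 * pi * (real k - 1) / real \<mu>))"

definition K1 :: "real \<Rightarrow> real \<Rightarrow> nat \<Rightarrow> nat \<Rightarrow> nat set" where
  "K1 \<zeta> \<psi> \<mu> W = {k \<in> {2..\<mu> * W + 1}. Re (hcoef \<zeta> \<psi> \<mu> k) > 0}"

definition alphaI :: "real \<Rightarrow> real \<Rightarrow> nat \<Rightarrow> nat \<Rightarrow> real" where
  "alphaI \<zeta> \<psi> \<mu> W = (\<Sum>k\<in>K1 \<zeta> \<psi> \<mu> W. Re (hcoef \<zeta> \<psi> \<mu> k)) ^ 2"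

end

theory Submission
  imports Defs
begin

(* Re h_k = sqrt zeta * cos (psi + 2 pi (k - 1) / mu), so alpha_I is zeta times the square of a
   sum of positive parts of cosines sampled at mu W equally spaced angles. The summand is periodic
   in the sample index with period mu, so the sum is W times the sum over any mu consecutive
   samples. Start at the first sample angle a >= 3 pi / 2 (sample index ceil (t mu)): then the
   first mu/2 samples lie in the arc where the cosine is nonnegative and the other mu/2 are their
   negatives. The remaining cosine sum over an arithmetic progression telescopes to
   - sin (a - pi / mu) / sin (pi / mu), and cos (a - pi / mu - 3 pi / 2) = - sin (a - pi / mu). *)

lemma sum_lessThan_add:
  fixes g :: "nat \<Rightarrow> 'a::comm_monoid_add"
  shows "(\<Sum>i<m + n. g i) = (\<Sum>i<m. g i) + (\<Sum>i<n. g (m + i))"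
  by (induction n) (simp_all add: ac_simps)

lemma sum_periodic_shift:
  fixes f :: "int \<Rightarrow> 'a::cancel_comm_monoid_add"
  assumes periodic: "\<And>m. f (m + int n) = f m"
  shows "(\<Sum>i<n. f (c + int i)) = (\<Sum>i<n. f (int i))"
proof -
  have shift_by_one: "(\<Sum>i<n. f (d + 1 + int i)) = (\<Sum>i<n. f (d + int i))" for d
    using sum.lessThan_Suc_shift[of "\<lambda>i. f (d + int i)" n] periodic[of d]
    by (simp add: ac_simps)
  show ?thesis
  proof (induction c rule: int_induct[where k = 0])
    case (step1 i)
    then show ?case using shift_by_one[of i] by simp
  next
    case (step2 i)
    then show ?case using shift_by_one[of "i - 1"] by simp
  qed simp
qed

lemma sum_periodic_repeat:
  fixes f :: "int \<Rightarrow> 'a::semiring_1_cancel"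
  assumes periodic: "\<And>m. f (m + int n) = f m"
  shows "(\<Sum>i<n * W. f (c + int i)) = of_nat W * (\<Sum>i<n. f (int i))"
proof (induction W)
  case (Suc W)
  have "(\<Sum>i<n * Suc W. f (c + int i))
      = (\<Sum>i<n * W. f (c + int i)) + (\<Sum>i<n. f (c + int (n * W) + int i))"
    using sum_lessThan_add[of "\<lambda>i. f (c + int i)" "n * W" n] by (simp add: ac_simps)
  also have "(\<Sum>i<n. f (c + int (n * W) + int i)) = (\<Sum>i<n. f (int i))"
    using periodic by (rule sum_periodic_shift)
  finally show ?case using Suc by (simp add: algebra_simps)
qed simp

lemma sum_cos_arith_progression:
  fixes a h :: real
  shows "2 * sin h * (\<Sum>i<k. cos (a + 2 * h * real i)) = sin (a + (2 * real k - 1) * h) - sin (a - h)"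
proof (induction k)
  case (Suc k)
  have "2 * sin h * cos (a + 2 * h * real k)
      = sin ((a + 2 * h * real k) + h) - sin ((a + 2 * h * real k) - h)"
    by (simp add: sin_add sin_diff)
  then show ?case using Suc by (simp add: algebra_simps)
qed simp

lemma sum_cos_half_turn:
  fixes a h :: real
  assumes "2 * h * real n = pi" and "sin h \<noteq> 0"
  shows "(\<Sum>i<n. cos (a + 2 * h * real i)) = - sin (a - h) / sin h"
proof -
  have "a + (2 * real n - 1) * h = (a - h) + pi"
    using assms(1) by (simp add: algebra_simps)
  then have "sin (a + (2 * real n - 1) * h) = - sin (a - h)"
    by (simp only: sin_periodic_pi)
  then have "sin h * (\<Sum>i<n. cos (a + 2 * h * real i)) = - sin (a - h)"
    using sum_cos_arith_progression[of h a n] by simp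
  then show ?thesis
    using assms(2) by (metis nonzero_mult_div_cancel_left)
qed

lemma sum_pos_part_cos_period:
  fixes a h :: real
  assumes half_turn: "2 * h * real n = pi"
    and window: "3 * pi / 2 \<le> a" "a < 3 * pi / 2 + 2 * h"
  shows "(\<Sum>i<2 * n. max 0 (cos (a + 2 * h * real i))) = - sin (a - h) / sin h"
proof -
  have "0 < h * real n"
    using half_turn pi_gt_zero by linarith
  then have "0 < h" "0 < real n"
    by (auto simp: zero_less_mult_iff)
  let ?\<theta> = "\<lambda>i. a + 2 * h * real i"
  have first_half: "0 \<le> cos (?\<theta> i)" if "i < n" for i
  proof -
    have "2 * h * real i \<le> 2 * h * (real n - 1)"
      using that \<open>0 < h\<close> by (intro mult_left_mono) auto
    then have "2 * h * real i \<le> pi - 2 * h"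
      using half_turn by (simp add: algebra_simps)
    moreover have "0 \<le> 2 * h * real i" using \<open>0 < h\<close> by simp
    ultimately have "- (pi / 2) \<le> ?\<theta> i - 2 * pi" "?\<theta> i - 2 * pi \<le> pi / 2"
      using window by linarith+
    then have "0 \<le> cos (?\<theta> i - 2 * pi)"
      by (rule cos_ge_zero)
    then show ?thesis
      using cos_periodic[of "?\<theta> i - 2 * pi"] by simp
  qed
  have second_half: "cos (?\<theta> (n + i)) = - cos (?\<theta> i)" for i
  proof -
    have "?\<theta> (n + i) = ?\<theta> i + pi" using half_turn by (simp add: algebra_simps)
    then show ?thesis by (simp only: cos_periodic_pi)
  qed
  have "(\<Sum>i<2 * n. max 0 (cos (?\<theta> i)))
      = (\<Sum>i<n. max 0 (cos (?\<theta> i))) + (\<Sum>i<n. max 0 (cos (?\<theta> (n + i))))"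
    unfolding mult_2 by (rule sum_lessThan_add)
  also have "\<dots> = (\<Sum>i<n. cos (?\<theta> i))"
  proof -
    have "max 0 (cos (?\<theta> i)) = cos (?\<theta> i)" if "i < n" for i
      using first_half[OF that] by simp
    moreover have "max 0 (cos (?\<theta> (n + i))) = 0" if "i < n" for i
      using first_half[OF that] second_half[of i] by simp
    ultimately show ?thesis by simp
  qed
  also have "\<dots> = - sin (a - h) / sin h"
  proof (rule sum_cos_half_turn[OF half_turn])
    have "2 * h * 1 \<le> 2 * h * real n"
      using \<open>0 < h\<close> \<open>0 < real n\<close> by (intro mult_left_mono) auto
    then have "0 < sin h"
      using half_turn \<open>0 < h\<close> by (intro sin_gt_zero) auto
    then show "sin h \<noteq> 0" by simp
  qed
  finally show ?thesis .
qed

lemma add_mult_ceiling_bounds: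
  fixes d b x :: real
  assumes "0 < d"
  shows "b \<le> x + d * of_int \<lceil>(b - x) / d\<rceil>" and "x + d * of_int \<lceil>(b - x) / d\<rceil> < b + d"
proof -
  let ?c = "of_int \<lceil>(b - x) / d\<rceil> :: real"
  have "(b - x) / d \<le> ?c" "?c - 1 < (b - x) / d"
    by linarith+
  then have "b - x \<le> d * ?c" "d * (?c - 1) < b - x"
    using assms by (metis pos_divide_le_eq mult.commute, metis pos_less_divide_eq mult.commute)
  then show "b \<le> x + d * ?c" and "x + d * ?c < b + d"
    by (simp_all add: algebra_simps)
qed

lemma Re_hcoef: "Re (hcoef \<zeta> \<psi> \<mu> k) = sqrt \<zeta> * cos (\<psi> + 2 * pi * (real k - 1) / real \<mu>)"
  unfolding hcoef_def by (simp add: Re_exp Im_exp)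

lemma alphaI_eq_sum_pos_part:
  assumes "0 < \<zeta>"
  shows "alphaI \<zeta> \<psi> \<mu> W
    = \<zeta> * (\<Sum>i<\<mu> * W. max 0 (cos (\<psi> + 2 * pi * real (Suc i) / real \<mu>)))\<^sup>2"
proof -
  let ?g = "\<lambda>k. max 0 (cos (\<psi> + 2 * pi * (real k - 1) / real \<mu>))"
  have pos_part: "(if 0 < Re (hcoef \<zeta> \<psi> \<mu> k) then Re (hcoef \<zeta> \<psi> \<mu> k) else 0) = sqrt \<zeta> * ?g k"
    for k using assms by (auto simp: Re_hcoef zero_less_mult_iff max_def)
  have "(\<Sum>k\<in>K1 \<zeta> \<psi> \<mu> W. Re (hcoef \<zeta> \<psi> \<mu> k))
      = (\<Sum>k\<in>{2..\<mu> * W + 1}. if 0 < Re (hcoef \<zeta> \<psi> \<mu> k) then Re (hcoef \<zeta> \<psi> \<mu> k) else 0)"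
    unfolding K1_def by (rule sum.inter_filter) simp
  also have "\<dots> = (\<Sum>k\<in>{1 + 1..\<mu> * W + 1}. sqrt \<zeta> * ?g k)"
    by (simp only: pos_part one_add_one)
  also have "\<dots> = sqrt \<zeta> * (\<Sum>i<\<mu> * W. ?g (Suc (Suc i)))"
    by (simp only: sum.shift_bounds_cl_nat_ivl sum_distrib_left) (simp add: sum.atLeast1_atMost_eq)
  finally show ?thesis
    using assms by (simp add: alphaI_def power_mult_distrib)
qed

lemma alphaI_closed_form:
  fixes \<psi> :: real and \<mu> :: nat and c :: int
  defines "a \<equiv> \<psi> + 2 * pi * of_int c / real \<mu>"
  assumes "0 < \<zeta>" and "even \<mu>" and "0 < \<mu>"
    and window: "3 * pi / 2 \<le> a" "a < 3 * pi / 2 + 2 * pi / real \<mu>"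
  shows "alphaI \<zeta> \<psi> \<mu> W = \<zeta> * (real W * sin (a - pi / real \<mu>) / sin (pi / real \<mu>))\<^sup>2"
proof -
  define f where "f m = max 0 (cos (\<psi> + 2 * pi * of_int m / real \<mu>))" for m :: int
  have periodic: "f (m + int \<mu>) = f m" for m
  proof -
    have "\<psi> + 2 * pi * of_int (m + int \<mu>) / real \<mu> = \<psi> + 2 * pi * of_int m / real \<mu> + 2 * pi"
      using \<open>0 < \<mu>\<close> by (simp add: field_simps)
    then show ?thesis unfolding f_def by (simp only: cos_periodic)
  qed
  obtain n where "\<mu> = 2 * n" using \<open>even \<mu>\<close> by blast
  have "(\<Sum>i<\<mu>. f (c + int i)) = (\<Sum>i<2 * n. max 0 (cos (a + 2 * (pi / real \<mu>) * real i)))"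
    unfolding f_def a_def \<open>\<mu> = 2 * n\<close> by (simp add: add_divide_distrib algebra_simps)
  also have "\<dots> = - sin (a - pi / real \<mu>) / sin (pi / real \<mu>)"
    using \<open>0 < \<mu>\<close> \<open>\<mu> = 2 * n\<close> window by (intro sum_pos_part_cos_period) auto
  finally have period_sum: "(\<Sum>i<\<mu>. f (c + int i)) = - sin (a - pi / real \<mu>) / sin (pi / real \<mu>)" .
  have "alphaI \<zeta> \<psi> \<mu> W = \<zeta> * (\<Sum>i<\<mu> * W. f (1 + int i))\<^sup>2"
    using alphaI_eq_sum_pos_part[OF \<open>0 < \<zeta>\<close>] by (simp add: f_def add.commute)
  also have "(\<Sum>i<\<mu> * W. f (1 + int i)) = real W * (\<Sum>i<\<mu>. f (c + int i))"
    using sum_periodic_repeat[of f, OF periodic] sum_periodic_shift[of f, OF periodic] by simp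
  finally show ?thesis
    unfolding period_sum by (simp add: power_mult_distrib power_divide)
qed

theorem theorem1:
  fixes W \<mu> :: nat and \<zeta> \<psi> :: real
  assumes "W \<ge> 1" and "\<mu> \<ge> 2" and "even \<mu>"
    and "\<zeta> > 0" and "\<psi> \<in> {0<..<2 * pi}"
  shows "let t = 3 / 4 - \<psi> / (2 * pi); V = sin (pi / real \<mu>) / real W in
           t \<in> {-1/4<..<3/4} \<and>
           alphaI \<zeta> \<psi> \<mu> W =
             \<zeta> * (cos (- 2 * pi * t - pi / real \<mu> + 2 * pi / real \<mu> * real_of_int \<lceil>t * real \<mu>\<rceil>))\<^sup>2
               / V\<^sup>2"
proof -
  define t where "t = 3 / 4 - \<psi> / (2 * pi)"
  define c where "c = \<lceil>t * real \<mu>\<rceil>"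
  define a where "a = \<psi> + 2 * pi * of_int c / real \<mu>"
  have "0 < \<mu>" using assms(2) by simp
  have t_range: "t \<in> {-1/4<..<3/4}"
    using assms(5) unfolding t_def by (auto simp: field_simps)
  have c_eq: "c = \<lceil>(3 * pi / 2 - \<psi>) / (2 * pi / real \<mu>)\<rceil>"
    unfolding c_def t_def by (simp add: field_simps)
  have "0 < 2 * pi / real \<mu>"
    using \<open>0 < \<mu>\<close> by simp
  moreover have "a = \<psi> + 2 * pi / real \<mu> * of_int c"
    unfolding a_def by simp
  ultimately have "3 * pi / 2 \<le> a" "a < 3 * pi / 2 + 2 * pi / real \<mu>"
    using add_mult_ceiling_bounds[where d = "2 * pi / real \<mu>" and b = "3 * pi / 2" and x = \<psi>, folded c_eq]
    by simp_all
  then have alpha: "alphaI \<zeta> \<psi> \<mu> W = \<zeta> * (real W * sin (a - pi / real \<mu>) / sin (pi / real \<mu>))\<^sup>2"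
    using alphaI_closed_form[of \<zeta> \<mu> \<psi> c W] assms(3,4) \<open>0 < \<mu>\<close> unfolding a_def by simp
  have arg: "- 2 * pi * t - pi / real \<mu> + 2 * pi / real \<mu> * of_int c = (a - pi / real \<mu>) - 3 / 2 * pi"
    unfolding t_def a_def by (simp add: field_simps)
  have "cos (- 2 * pi * t - pi / real \<mu> + 2 * pi / real \<mu> * of_int c) = - sin (a - pi / real \<mu>)"
    unfolding arg by (simp only: cos_diff cos_3over2_pi sin_3over2_pi)
  then show ?thesis
    using alpha t_range assms(1)
    unfolding Let_def t_def[symmetric] c_def[symmetric] by (simp add: power_divide power_mult_distrib)
qed

end
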